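(* If $U$ is a $d$-dimensional subspace of $W$, then $$\#\{T\in L(W,V):\mathfrak{I}(T)=U\}=q^{d^2}\prod_{i=d+1}^{k}(q^n-q^i).$$
   Context: Let $\mathbb{F}_q$ be the finite field with $q$ elements, $n\ge k$ positive integers, $V$ an $n$-dimensional $\mathbb{F}_q$-vector space and $W\subseteq V$ a $k$-dimensional subspace. $L(W,V)$ is the space of $\mathbb{F}_q$-linear maps $W\to V$. For $T\in L(W,V)$, $\mathfrak{I}(T)$ denotes the maximal $T$-invariant subspace contained in $W$, i.e. the largest subspace $U\subseteq W$ with $T(U)\subseteq U$. Empty products equal $1$. *)

theory Defs
  imports Complex_Main
begin

text \<open>A linear map on W is represented canonically
  by the function that agrees with it on W and is 0 outside W.\<close>
definition lin_maps :: "('a::field \<Rightarrow> 'v::ab_group_add \<Rightarrow> 'v) \<Rightarrow> 'v set \<Rightarrow> ('v \<Rightarrow> 'v) set" where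
  "lin_maps scale W =
     {T. (\<forall>x\<in>W. \<forall>y\<in>W. T (x + y) = T x + T y)
       \<and> (\<forall>c. \<forall>x\<in>W. T (scale c x) = scale c (T x))
       \<and> (\<forall>x. x \<notin> W \<longrightarrow> T x = 0)}"

definition max_inv_sub :: "('a::field \<Rightarrow> 'v::ab_group_add \<Rightarrow> 'v) \<Rightarrow> 'v set \<Rightarrow> ('v \<Rightarrow> 'v) \<Rightarrow> 'v set" where
  "max_inv_sub scale W T =
     (THE U. module.subspace scale U \<and> U \<subseteq> W \<and> T ` U \<subseteq> U
        \<and> (\<forall>U'. module.subspace scale U' \<and> U' \<subseteq> W \<and> T ` U' \<subseteq> U' \<longrightarrow> U' \<subseteq> U))"

end

theory Submission
  imports Defs "HOL-Library.FuncSet" "HOL-Library.Cardinality"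
begin

text \<open>Write \<open>\<I>(T)\<close> for the largest \<open>T\<close>-invariant subspace of \<open>W\<close>; it is the set of vectors whose
  forward \<open>T\<close>-orbit stays in \<open>W\<close>. Count by induction on \<open>n = dim V\<close>. If \<open>W = V\<close>, then \<open>\<I>(T) = W\<close>
  for every \<open>T\<close>. Otherwise split \<open>V = V' \<oplus> \<langle>e\<rangle>\<close> with \<open>W \<subseteq> V'\<close> and write \<open>T = A + P\<close> with
  \<open>A : W \<rightarrow> V'\<close> and \<open>P : W \<rightarrow> \<langle>e\<rangle>\<close>. An orbit of \<open>T\<close> stays in \<open>W\<close> iff it stays in \<open>K = ker P\<close>, on
  which \<open>T\<close> agrees with \<open>A\<close>; so \<open>\<I>(T)\<close> is the maximal \<open>A\<close>-invariant subspace of \<open>K\<close>, which forces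
  \<open>U \<subseteq> K\<close>. For \<open>P = 0\<close> this is the count for \<open>V'\<close>; each of the \<open>q\<^sup>k\<^sup>-\<^sup>d - 1\<close> nonzero \<open>P\<close> vanishing
  on \<open>U\<close> has a hyperplane of \<open>W\<close> as kernel, and \<open>A\<close> is free on a complementary line. Hence
  \<open>N(n+1,k,d) = N(n,k,d) + (q\<^sup>k\<^sup>-\<^sup>d - 1) q\<^sup>n N(n,k-1,d)\<close>, a recurrence the product formula satisfies.\<close>

definition max_inv_count :: "nat \<Rightarrow> nat \<Rightarrow> nat \<Rightarrow> nat \<Rightarrow> nat" where
  "max_inv_count q n k d = q ^ (d ^ 2) * (\<Prod>i\<in>{d+1..k}. q ^ n - q ^ i)"

lemma of_nat_max_inv_count:
  assumes "k \<le> n" "1 \<le> q"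
  shows "int (max_inv_count q n k d) = int q ^ (d ^ 2) * (\<Prod>i\<in>{d+1..k}. int q ^ n - int q ^ i)"
proof -
  have "(\<Prod>i\<in>{d+1..k}. int (q ^ n - q ^ i)) = (\<Prod>i\<in>{d+1..k}. int q ^ n - int q ^ i)"
    using assms by (intro prod.cong) (simp_all add: of_nat_diff power_increasing)
  then show ?thesis
    unfolding max_inv_count_def by (simp add: of_nat_prod)
qed

lemma prod_power_diff_shift:
  "(\<Prod>i\<in>{d<..d+t}. (Q::int) ^ Suc m - Q ^ i) = Q ^ t * (\<Prod>i\<in>{d..<d+t}. Q ^ m - Q ^ i)"
proof (induction t)
  case 0 then show ?case by simp
next
  case (Suc t)
  have "{d<..d + Suc t} = insert (Suc (d+t)) {d<..d+t}" "{d..<d + Suc t} = insert (d+t) {d..<d+t}"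
    by auto
  then show ?case using Suc by (simp add: algebra_simps)
qed

lemma max_inv_count_Suc:
  assumes "d \<le> k" "k \<le> m" "1 \<le> q"
  shows "max_inv_count q (Suc m) k d
       = max_inv_count q m k d + (q ^ (k - d) - 1) * q ^ m * max_inv_count q m (k - 1) d"
proof (cases "d = k")
  case True then show ?thesis by (simp add: max_inv_count_def)
next
  case False
  then have dk: "d < k" using assms by simp
  define Q where "Q = int q"
  define P where "P = (\<Prod>i\<in>{Suc d..<k}. Q ^ m - Q ^ i)"
  have Suc_m: "int (max_inv_count q (Suc m) k d) = Q ^ (d^2) * (Q ^ (k - d) * ((Q ^ m - Q ^ d) * P))"
  proof -
    have "int (max_inv_count q (Suc m) k d) = Q ^ (d^2) * (\<Prod>i\<in>{d<..d+(k-d)}. Q ^ Suc m - Q ^ i)"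
      using of_nat_max_inv_count[of k "Suc m" q d] assms dk unfolding Q_def
      by (simp add: atLeastSucAtMost_greaterThanAtMost)
    also have "\<dots> = Q ^ (d^2) * (Q ^ (k - d) * (\<Prod>i\<in>{d..<d+(k-d)}. Q ^ m - Q ^ i))"
      by (simp only: prod_power_diff_shift)
    also have "(\<Prod>i\<in>{d..<d+(k-d)}. Q ^ m - Q ^ i) = (Q ^ m - Q ^ d) * P"
      unfolding P_def using dk by (simp add: prod.atLeast_Suc_lessThan)
    finally show ?thesis .
  qed
  have m_k: "int (max_inv_count q m k d) = Q ^ (d^2) * (P * (Q ^ m - Q ^ k))"
    using of_nat_max_inv_count[of k m q d] assms dk unfolding Q_def P_def
    by (simp add: atLeastLessThanSuc_atLeastAtMost[symmetric] prod.atLeastLessThan_Suc)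
  have m_k1: "int (max_inv_count q m (k - 1) d) = Q ^ (d^2) * P"
  proof -
    have "{d + 1..k - 1} = {Suc d..<k}" using dk by auto
    then show ?thesis using of_nat_max_inv_count[of "k-1" m q d] assms unfolding Q_def P_def by simp
  qed
  have unit: "int (q ^ (k - d) - 1) = Q ^ (k - d) - 1"
    using assms(3) unfolding Q_def by (simp add: of_nat_diff)
  have split_k: "Q ^ k = Q ^ (k - d) * Q ^ d"
    using dk by (simp add: power_add[symmetric])
  have ring_identity: "a*(b*((c - e)*p)) = a*(p*(c - b*e)) + (b - 1)*c*(a*p)" for a b c e p :: int
    by (simp add: algebra_simps)
  have "int (max_inv_count q (Suc m) k d)
      = int (max_inv_count q m k d + (q ^ (k - d) - 1) * q ^ m * max_inv_count q m (k - 1) d)"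
    unfolding Suc_m m_k m_k1 unit split_k of_nat_add of_nat_mult of_nat_power Q_def[symmetric]
    by (rule ring_identity)
  then show ?thesis by (simp only: of_nat_eq_iff)
qed

lemma max_inv_count_full:
  "max_inv_count q n n n = q ^ (n * n)" "d < n \<Longrightarrow> max_inv_count q n n d = 0"
  by (auto simp: max_inv_count_def power2_eq_square intro!: bexI[of _ n])

locale finite_vector_space = vector_space scale
  for scale :: "'a::field \<Rightarrow> 'v::ab_group_add \<Rightarrow> 'v" (infixr \<open>*s\<close> 75) +
  assumes finite_scalars: "finite (UNIV::'a set)" and finite_vectors: "finite (UNIV::'v set)"
begin

lemma exists_basis: "\<exists>B. independent B \<and> span B = UNIV"
  by (metis basis_exists span_subspace subspace_UNIV top_greatest)

sublocale fd: finite_dimensional_vector_space scale "SOME B. independent B \<and> span B = UNIV"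
proof
  let ?B = "SOME B. independent B \<and> span B = UNIV"
  show "finite ?B" using finite_vectors by (rule finite_subset[OF subset_UNIV])
  show "independent ?B" "span ?B = UNIV" using someI_ex[OF exists_basis] by blast+
qed

lemma finite_vector_set [simp]: "finite (S::'v set)"
  using finite_vectors by (rule finite_subset[OF subset_UNIV])

lemma finite_map_set [simp]: "finite (S::('v \<Rightarrow> 'v) set)"
proof -
  have "finite (PiE (UNIV::'v set) (\<lambda>_. UNIV::'v set))" by (rule finite_PiE) auto
  then show ?thesis by (simp add: PiE_UNIV_domain finite_subset[OF subset_UNIV])
qed

lemma card_scalars_ge_1: "1 \<le> CARD('a)"
  using finite_scalars by (simp add: Suc_le_eq card_gt_0_iff)

lemma card_span:
  assumes "independent B" shows "card (span B) = CARD('a) ^ card B"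
proof -
  have fB: "finite B" by simp
  let ?g = "\<lambda>f. \<Sum>b\<in>B. f b *s b"
  have "span B = ?g ` (PiE B (\<lambda>_. UNIV))"
  proof
    show "span B \<subseteq> ?g ` (PiE B (\<lambda>_. UNIV))"
    proof
      fix x assume "x \<in> span B"
      then obtain u where x: "x = (\<Sum>v\<in>B. u v *s v)" using span_finite[OF fB] by auto
      have "?g (restrict u B) = x" unfolding x by (rule sum.cong) auto
      then show "x \<in> ?g ` (PiE B (\<lambda>_. UNIV))" by (intro image_eqI[of x ?g "restrict u B"]) simp_all
    qed
    show "?g ` (PiE B (\<lambda>_. UNIV)) \<subseteq> span B" using span_finite[OF fB] by auto
  qed
  moreover have "inj_on ?g (PiE B (\<lambda>_. UNIV))"
  proof
    fix f g assume f: "f \<in> PiE B (\<lambda>_. UNIV)" and g: "g \<in> PiE B (\<lambda>_. UNIV)" and eq: "?g f = ?g g"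
    have "(\<Sum>b\<in>B. (f b - g b) *s b) = 0"
      using eq by (simp add: scale_left_diff_distrib sum_subtractf)
    then have "f b - g b = 0" if "b \<in> B" for b
      by (rule independentD[OF assms fB order_refl _ that])
    then show "f = g" using f g by (auto intro: PiE_ext)
  qed
  ultimately have "card (span B) = card (PiE B (\<lambda>_. (UNIV::'a set)))" by (simp add: card_image)
  then show ?thesis by (simp add: card_PiE)
qed

lemma card_subspace: assumes "subspace Y" shows "card Y = CARD('a) ^ dim Y"
  using fd.basis_subspace_exists[OF assms] card_span by metis

definition linear_on :: "'v set \<Rightarrow> ('v \<Rightarrow> 'v) \<Rightarrow> bool" where
  "linear_on W T \<longleftrightarrow> (\<forall>x\<in>W. \<forall>y\<in>W. T (x + y) = T x + T y) \<and> (\<forall>c. \<forall>x\<in>W. T (c *s x) = c *s T x)"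

definition maps_into :: "'v set \<Rightarrow> 'v set \<Rightarrow> ('v \<Rightarrow> 'v) set" where
  "maps_into W Y = {T. linear_on W T \<and> (\<forall>x. x \<notin> W \<longrightarrow> T x = 0) \<and> (\<forall>x\<in>W. T x \<in> Y)}"

lemma lin_maps_eq_maps_into: "lin_maps scale W = maps_into W UNIV"
  unfolding lin_maps_def maps_into_def linear_on_def by simp

lemma linear_on_subset: "linear_on W T \<Longrightarrow> K \<subseteq> W \<Longrightarrow> linear_on K T"
  unfolding linear_on_def by blast

lemma linear_on_0: assumes "linear_on W T" "subspace W" shows "T 0 = 0"
proof -
  have "T (0 + 0) = T 0 + T 0" using assms subspace_0 unfolding linear_on_def by blast
  then show ?thesis by simp
qed

lemma maps_into_0: "T \<in> maps_into W Y \<Longrightarrow> subspace W \<Longrightarrow> T 0 = 0"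
  using linear_on_0[of W T] unfolding maps_into_def by simp

lemma zero_in_maps_into: "subspace Y \<Longrightarrow> (\<lambda>x. 0) \<in> maps_into W Y"
  unfolding maps_into_def linear_on_def by (simp add: subspace_0)

lemma linear_on_sum:
  assumes "linear_on W T" "subspace W" "\<And>i. i \<in> I \<Longrightarrow> g i \<in> W"
  shows "T (sum g I) = (\<Sum>i\<in>I. T (g i))"
  using assms(3)
proof (induction I rule: infinite_finite_induct)
  case (insert x F)
  have "sum g F \<in> W" using insert.prems assms(2) by (auto intro: subspace_sum)
  then show ?case using insert assms(1) unfolding linear_on_def by auto
qed (use linear_on_0[OF assms(1,2)] in simp_all)

lemma linear_on_representation:
  assumes "linear_on W T" "subspace W" "independent B" "B \<subseteq> W" "x \<in> span B"
  shows "T x = (\<Sum>b\<in>B. representation B x b *s T b)"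
proof -
  have "T x = T (\<Sum>b\<in>B. representation B x b *s b)"
    using sum_representation_eq[OF assms(3,5)] by simp
  also have "\<dots> = (\<Sum>b\<in>B. T (representation B x b *s b))"
    using assms by (intro linear_on_sum) (auto intro: subspace_scale)
  also have "\<dots> = (\<Sum>b\<in>B. representation B x b *s T b)"
    using assms unfolding linear_on_def by (intro sum.cong) auto
  finally show ?thesis .
qed

lemma maps_into_eqI:
  assumes S: "S \<in> maps_into (span B) Y" and T: "T \<in> maps_into (span B) Y" and B: "independent B"
    and ST: "\<And>b. b \<in> B \<Longrightarrow> S b = T b"
  shows "S = T"
proof
  fix x show "S x = T x"
  proof (cases "x \<in> span B")
    case True
    have "S x = (\<Sum>b\<in>B. representation B x b *s S b)"
      using S True B by (intro linear_on_representation) (auto simp: maps_into_def span_base)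
    also have "\<dots> = (\<Sum>b\<in>B. representation B x b *s T b)"
      using ST by simp
    also have "\<dots> = T x"
      using T True B by (intro linear_on_representation[symmetric]) (auto simp: maps_into_def span_base)
    finally show ?thesis .
  next
    case False then show ?thesis using S T by (simp add: maps_into_def)
  qed
qed

lemma linear_on_construct:
  assumes B: "independent B"
  shows "linear_on (span B) (\<lambda>x. \<Sum>b\<in>B. representation B x b *s f b)"
  unfolding linear_on_def
proof (intro conjI ballI allI)
  fix x y assume "x \<in> span B" "y \<in> span B"
  then show "(\<Sum>b\<in>B. representation B (x + y) b *s f b)
      = (\<Sum>b\<in>B. representation B x b *s f b) + (\<Sum>b\<in>B. representation B y b *s f b)"
    by (simp add: representation_add[OF B] scale_left_distrib sum.distrib)
next
  fix c x assume "x \<in> span B"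
  then show "(\<Sum>b\<in>B. representation B (c *s x) b *s f b) = c *s (\<Sum>b\<in>B. representation B x b *s f b)"
    by (simp add: representation_scale[OF B] scale_sum_right)
qed

lemma card_extensions_basis:
  assumes BK: "BK \<subseteq> BW" and BW: "independent BW" and Y: "subspace Y"
    and S: "S \<in> maps_into (span BK) Y"
  shows "card {T \<in> maps_into (span BW) Y. \<forall>x\<in>span BK. T x = S x} = card Y ^ (card BW - card BK)"
proof -
  let ?W = "span BW" and ?K = "span BK"
  let ?A = "{T \<in> maps_into ?W Y. \<forall>x\<in>?K. T x = S x}"
  let ?P = "PiE BW (\<lambda>b. if b \<in> BK then {S b} else Y)"
  have indK: "independent BK" by (rule independent_mono[OF BW BK])
  have KW: "?K \<subseteq> ?W" by (rule span_mono[OF BK])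
  have SY: "S b \<in> Y" if "b \<in> BK" for b
    using S that span_base[of b BK] unfolding maps_into_def by blast
  have inj: "inj_on (\<lambda>T. restrict T BW) ?A"
  proof (rule inj_onI)
    fix T T' assume T: "T \<in> ?A" and T': "T' \<in> ?A" and eq: "restrict T BW = restrict T' BW"
    show "T = T'"
    proof (rule maps_into_eqI[OF _ _ BW])
      show "T \<in> maps_into ?W Y" "T' \<in> maps_into ?W Y" using T T' by simp_all
      show "T b = T' b" if "b \<in> BW" for b using fun_cong[OF eq, of b] that by simp
    qed
  qed
  have img: "(\<lambda>T. restrict T BW) ` ?A = ?P"
  proof
    show "(\<lambda>T. restrict T BW) ` ?A \<subseteq> ?P"
    proof clarify
      fix T assume T: "T \<in> maps_into ?W Y" "\<forall>x\<in>?K. T x = S x"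
      have "T b \<in> Y" if "b \<in> BW" for b using T(1) that span_base[of b BW] by (simp add: maps_into_def)
      moreover have "T b = S b" if "b \<in> BK" for b using T(2) that span_base[of b BK] by simp
      ultimately show "restrict T BW \<in> ?P" by auto
    qed
    show "?P \<subseteq> (\<lambda>T. restrict T BW) ` ?A"
    proof
      fix f assume f: "f \<in> ?P"
      define T where "T x = (if x \<in> ?W then (\<Sum>b\<in>BW. representation BW x b *s f b) else 0)" for x
      have fS: "f b = S b" if "b \<in> BK" for b
        using PiE_mem[OF f, of b] that BK by auto
      have fY: "f b \<in> Y" if "b \<in> BW" for b
        using PiE_mem[OF f that] SY fS by (cases "b \<in> BK") auto
      have Tb: "T b = f b" if b: "b \<in> BW" for b
      proof -
        have "T b = (\<Sum>v\<in>BW. (if v = b then 1 else 0) *s f v)"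
          using b span_base[of b BW] representation_basis[OF BW b] by (simp add: T_def)
        also have "\<dots> = f b" using b by (simp add: if_distrib[of "\<lambda>c. c *s _"] cong: if_cong)
        finally show ?thesis .
      qed
      have lin: "linear_on ?W T"
        using linear_on_construct[OF BW, of f] unfolding linear_on_def T_def
        by (simp add: span_add span_scale)
      have TM: "T \<in> maps_into ?W Y"
        unfolding maps_into_def using lin fY Y
        by (auto simp: T_def intro!: subspace_sum subspace_scale)
      have "T x = S x" if x: "x \<in> ?K" for x
      proof -
        have "T x = (\<Sum>b\<in>BK. representation BK x b *s T b)"
          using linear_on_subset[OF lin KW] x indK by (intro linear_on_representation) (auto simp: span_base)
        also have "\<dots> = (\<Sum>b\<in>BK. representation BK x b *s S b)"
          using Tb fS BK by (intro sum.cong) auto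
        also have "\<dots> = S x"
          using S x indK by (intro linear_on_representation[symmetric]) (auto simp: maps_into_def span_base)
        finally show ?thesis .
      qed
      moreover have "restrict T BW = f" using f Tb by (auto simp: PiE_def extensional_def)
      ultimately show "f \<in> (\<lambda>T. restrict T BW) ` ?A" using TM by blast
    qed
  qed
  have "card ?A = card ?P" using card_image[OF inj] img by simp
  also have "\<dots> = (\<Prod>b\<in>BW. if b \<in> BK then 1 else card Y)"
    by (simp add: card_PiE) (intro prod.cong; simp)
  also have "\<dots> = card Y ^ (card BW - card BK)"
    using BK by (simp add: prod.If_cases Diff_eq[symmetric] card_Diff_subset)
  finally show ?thesis .
qed

lemma obtain_basis_extension:
  assumes K: "subspace K" and W: "subspace W" and KW: "K \<subseteq> W"
  obtains BK BW where "BK \<subseteq> BW" "independent BW" "span BK = K" "span BW = W"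
    "card BK = dim K" "card BW = dim W"
proof -
  obtain BK where BK: "BK \<subseteq> K" "independent BK" "span BK = K" "card BK = dim K"
    using fd.basis_subspace_exists[OF K] by blast
  obtain B where B: "BK \<subseteq> B" "B \<subseteq> W" "independent B" "W \<subseteq> span B"
    using maximal_independent_subset_extend[of BK W] BK KW by blast
  show ?thesis
    using that[OF B(1) B(3) BK(3) span_subspace[OF B(2,4) W] BK(4) basis_card_eq_dim[OF B(2,4,3)]] .
qed

lemma card_extensions:
  assumes K: "subspace K" and W: "subspace W" and KW: "K \<subseteq> W" and Y: "subspace Y"
    and S: "S \<in> maps_into K Y"
  shows "card {T \<in> maps_into W Y. \<forall>x\<in>K. T x = S x} = CARD('a) ^ (dim Y * (dim W - dim K))"
proof -
  obtain BK BW where b: "BK \<subseteq> BW" "independent BW" "span BK = K" "span BW = W"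
    "card BK = dim K" "card BW = dim W"
    using obtain_basis_extension[OF K W KW] .
  show ?thesis
    using card_extensions_basis[OF b(1,2) Y] S card_subspace[OF Y]
    unfolding b(3-6) by (simp add: power_mult)
qed

lemma card_maps_into:
  assumes W: "subspace W" and Y: "subspace Y"
  shows "card (maps_into W Y) = CARD('a) ^ (dim Y * dim W)"
proof -
  have "maps_into W Y = {T \<in> maps_into W Y. \<forall>x\<in>{0}. T x = (\<lambda>x. 0) x}"
    using maps_into_0[OF _ W] by auto
  also have "card \<dots> = CARD('a) ^ (dim Y * (dim W - dim {0::'v}))"
    using subspace_0[OF W] zero_in_maps_into[OF Y]
    by (intro card_extensions[OF subspace_single_0 W _ Y]) auto
  finally show ?thesis by simp
qed

definition inv_core :: "'v set \<Rightarrow> ('v \<Rightarrow> 'v) \<Rightarrow> 'v set" where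
  "inv_core W T = {x. \<forall>j. (T ^^ j) x \<in> W}"

definition zero_outside :: "'v set \<Rightarrow> ('v \<Rightarrow> 'v) \<Rightarrow> ('v \<Rightarrow> 'v)" where
  "zero_outside K A = (\<lambda>x. if x \<in> K then A x else 0)"

lemma inv_core_subset: "inv_core W T \<subseteq> W"
  unfolding inv_core_def by (metis (mono_tags) funpow_0 mem_Collect_eq subsetI)

lemma invariant_subset_inv_core:
  assumes "U \<subseteq> W" "T ` U \<subseteq> U" shows "U \<subseteq> inv_core W T"
proof
  fix x assume x: "x \<in> U"
  have "(T ^^ j) x \<in> U" for j
    by (induction j) (use x assms(2) in auto)
  then show "x \<in> inv_core W T" unfolding inv_core_def using assms(1) by auto
qed

lemma inv_core_invariant: "T ` inv_core W T \<subseteq> inv_core W T"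
proof (clarsimp simp: inv_core_def)
  fix x j assume "\<forall>j. (T ^^ j) x \<in> W"
  then have "(T ^^ Suc j) x \<in> W" by blast
  then show "(T ^^ j) (T x) \<in> W" by (simp add: funpow_swap1)
qed

lemma subspace_inv_core:
  assumes lin: "linear_on W T" and W: "subspace W"
  shows "subspace (inv_core W T)"
proof -
  have add: "(T ^^ j) (x + y) = (T ^^ j) x + (T ^^ j) y"
    if "x \<in> inv_core W T" "y \<in> inv_core W T" for x y j
    using that lin by (induction j) (simp_all add: inv_core_def linear_on_def)
  have scale: "(T ^^ j) (c *s x) = c *s (T ^^ j) x" if "x \<in> inv_core W T" for x c j
    using that lin by (induction j) (simp_all add: inv_core_def linear_on_def)
  have "(T ^^ j) 0 = 0" for j
    by (induction j) (simp_all add: linear_on_0[OF lin W])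
  then show ?thesis
    unfolding subspace_def using add scale W
    by (auto simp: inv_core_def subspace_0 subspace_add subspace_scale)
qed

lemma max_inv_sub_eq_inv_core:
  assumes "linear_on W T" "subspace W"
  shows "max_inv_sub scale W T = inv_core W T"
  unfolding max_inv_sub_def
proof (rule the_equality)
  show "subspace (inv_core W T) \<and> inv_core W T \<subseteq> W \<and> T ` inv_core W T \<subseteq> inv_core W T \<and>
    (\<forall>U'. subspace U' \<and> U' \<subseteq> W \<and> T ` U' \<subseteq> U' \<longrightarrow> U' \<subseteq> inv_core W T)"
    using subspace_inv_core[OF assms] inv_core_subset[of W T] inv_core_invariant[of T W]
      invariant_subset_inv_core[of _ W T] by simp
next
  fix U assume U: "subspace U \<and> U \<subseteq> W \<and> T ` U \<subseteq> U \<and>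
    (\<forall>U'. subspace U' \<and> U' \<subseteq> W \<and> T ` U' \<subseteq> U' \<longrightarrow> U' \<subseteq> U)"
  then have "U \<subseteq> inv_core W T" by (simp add: invariant_subset_inv_core)
  moreover have "inv_core W T \<subseteq> U"
    using U subspace_inv_core[OF assms] inv_core_subset[of W T] inv_core_invariant[of T W] by simp
  ultimately show "U = inv_core W T" by (rule subset_antisym)
qed

lemma inv_core_subset_cong:
  assumes "\<And>z. z \<in> W \<Longrightarrow> S z = T z" shows "inv_core W S \<subseteq> inv_core W T"
proof
  fix x assume x: "x \<in> inv_core W S"
  have orbit_eq: "(S ^^ j) x = (T ^^ j) x" for j
  proof (induction j)
    case (Suc j)
    have "(S ^^ j) x \<in> W" using x by (simp add: inv_core_def)
    then show ?case using Suc assms by simp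
  qed simp
  then have "(T ^^ j) x \<in> W" for j using x by (simp add: inv_core_def flip: orbit_eq)
  then show "x \<in> inv_core W T" by (simp add: inv_core_def)
qed

lemma inv_core_cong:
  assumes "\<And>z. z \<in> W \<Longrightarrow> S z = T z" shows "inv_core W S = inv_core W T"
  by (intro subset_antisym inv_core_subset_cong) (simp_all add: assms)

text \<open>A vector whose \<open>(A + P)\<close>-orbit stays in \<open>W\<close> is moved by \<open>P\<close> only into \<open>V' \<inter> \<langle>e\<rangle> = 0\<close>.\<close>

lemma inv_core_add_complement:
  assumes WV: "W \<subseteq> V'" and V': "subspace V'" and A: "A \<in> maps_into W V'" and P: "P \<in> maps_into W L"
    and VL: "\<And>z. z \<in> V' \<Longrightarrow> z \<in> L \<Longrightarrow> z = 0"
  shows "inv_core W (\<lambda>x. A x + P x) = inv_core {x\<in>W. P x = 0} (zero_outside {x\<in>W. P x = 0} A)"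
    (is "inv_core W ?T = inv_core ?K ?A")
proof -
  have ker: "P z = 0" if "z \<in> W" "?T z \<in> W" for z
  proof (rule VL)
    have "A z \<in> V'" using A that unfolding maps_into_def by simp
    then have "?T z - A z \<in> V'" using that WV subspace_diff[OF V'] by blast
    then show "P z \<in> V'" by simp
    show "P z \<in> L" using P that unfolding maps_into_def by simp
  qed
  have "inv_core W ?T = inv_core ?K ?T"
  proof (intro equalityI subsetI)
    fix x assume x: "x \<in> inv_core W ?T"
    have "(?T ^^ j) x \<in> W \<and> (?T ^^ Suc j) x \<in> W" for j
      using x unfolding inv_core_def by blast
    then show "x \<in> inv_core ?K ?T" using ker unfolding inv_core_def by simp
  qed (use inv_core_subset in \<open>auto simp: inv_core_def\<close>)
  also have "\<dots> = inv_core ?K ?A"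
    by (rule inv_core_cong) (simp add: zero_outside_def)
  finally show ?thesis .
qed

lemma subspace_kernel:
  assumes P: "P \<in> maps_into W Y" and W: "subspace W"
  shows "subspace {x\<in>W. P x = 0}"
  using P maps_into_0[OF P W] W
  unfolding subspace_def maps_into_def linear_on_def by simp

lemma dim_kernel_Suc:
  assumes P: "P \<in> maps_into W (span {e})" and W: "subspace W" and nz: "P \<noteq> (\<lambda>x. 0)"
  shows "Suc (dim {x\<in>W. P x = 0}) = dim W"
proof -
  let ?K = "{x\<in>W. P x = 0}"
  have add: "\<And>x y. x \<in> W \<Longrightarrow> y \<in> W \<Longrightarrow> P (x + y) = P x + P y"
    and hom: "\<And>c x. x \<in> W \<Longrightarrow> P (c *s x) = c *s P x"
    using P unfolding maps_into_def linear_on_def by blast+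
  obtain w where pw: "P w \<noteq> 0" using nz by auto
  have w: "w \<in> W" using pw P unfolding maps_into_def by auto
  obtain c0 where c0: "P w = c0 *s e" using P w unfolding maps_into_def span_singleton by auto
  have c0nz: "c0 \<noteq> 0" using pw c0 by auto
  have "W \<subseteq> span (insert w ?K)"
  proof
    fix x assume x: "x \<in> W"
    obtain c where c: "P x = c *s e" using P x unfolding maps_into_def span_singleton by auto
    define a where "a = c / c0"
    have aw: "(- a) *s w \<in> W" by (rule subspace_scale[OF W w])
    have xw: "x + (- a) *s w \<in> W" by (rule subspace_add[OF W x aw])
    have "P (x + (- a) *s w) = c *s e + (- a * c0) *s e"
      unfolding add[OF x aw] hom[OF w] c c0 by simp
    also have "\<dots> = 0" using c0nz unfolding a_def by (simp add: scale_left_distrib[symmetric])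
    finally have "x - a *s w \<in> span ?K" using xw by (simp add: span_base)
    then show "x \<in> span (insert w ?K)" unfolding span_breakdown_eq by blast
  qed
  moreover have "span (insert w ?K) \<subseteq> W" using w by (intro span_minimal[OF _ W]) auto
  ultimately have "dim W = dim (span (insert w ?K))" by (simp add: subset_antisym)
  also have "\<dots> = Suc (dim ?K)"
  proof -
    have sK: "span ?K = ?K" using subspace_kernel[OF P W] by (rule span_eq_iff[THEN iffD2])
    have "w \<notin> span ?K" unfolding sK using pw by blast
    then show ?thesis by (simp add: fd.dim_insert)
  qed
  finally show ?thesis by simp
qed

lemma obtain_hyperplane:
  assumes V: "subspace V" and W: "subspace W" and WV: "W \<subseteq> V" and ne: "W \<noteq> V"
  obtains V' e c where "subspace V'" "W \<subseteq> V'" "V' \<subseteq> V" "e \<in> V" "e \<noteq> 0"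
    "dim V = Suc (dim V')"
    "\<And>z. z \<in> V' \<Longrightarrow> z \<in> span {e} \<Longrightarrow> z = 0"
    "\<And>v. v \<in> V \<Longrightarrow> v - c v *s e \<in> V'"
    "\<And>u v. u \<in> V \<Longrightarrow> v \<in> V \<Longrightarrow> c (u + v) = c u + c v"
    "\<And>a v. v \<in> V \<Longrightarrow> c (a *s v) = a * c v"
proof -
  obtain BW BV where b: "BW \<subseteq> BV" "independent BV" "span BW = W" "span BV = V" "card BV = dim V"
    using obtain_basis_extension[OF W V WV] by blast
  obtain e where e: "e \<in> BV" "e \<notin> BW"
    using b(1,3,4) ne by (metis span_mono subset_antisym subsetI)
  define V' where "V' = span (BV - {e})"
  define c where "c v = representation BV v e" for v
  have indV': "independent (BV - {e})" using independent_mono[OF b(2)] by blast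
  have WV': "W \<subseteq> V'" unfolding V'_def b(3)[symmetric] using e b(1) by (intro span_mono) blast
  have V'V: "V' \<subseteq> V" unfolding V'_def b(4)[symmetric] by (intro span_mono) blast
  have eV: "e \<in> V" using e(1) span_superset[of BV] b(4) by blast
  have enz: "e \<noteq> 0" using e(1) b(2) dependent_zero by blast
  have dimV: "dim V = Suc (dim V')"
    unfolding V'_def dim_span_eq_card_independent[OF indV'] b(5)[symmetric]
    using e(1) card_Suc_Diff1[of BV e] by simp
  have enot: "e \<notin> V'" using b(2) e(1) unfolding V'_def dependent_def by blast
  have VL: "z = 0" if z: "z \<in> V'" "z \<in> span {e}" for z
  proof -
    obtain a where a: "z = a *s e" using z(2) unfolding span_singleton by blast
    have "a = 0"
    proof (rule ccontr)
      assume "a \<noteq> 0"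
      then have "e = (1 / a) *s z" using a by simp
      then show False using enot z(1) unfolding V'_def by (simp add: span_scale)
    qed
    then show ?thesis using a by simp
  qed
  have dec: "v - c v *s e \<in> V'" if v: "v \<in> V" for v
  proof -
    have "v = (\<Sum>b\<in>BV. representation BV v b *s b)"
      using sum_representation_eq[OF b(2)] v b(4) by simp
    also have "\<dots> = c v *s e + (\<Sum>b\<in>BV - {e}. representation BV v b *s b)"
      unfolding c_def by (rule sum.remove[OF _ e(1)]) simp
    finally have "v - c v *s e = (\<Sum>b\<in>BV - {e}. representation BV v b *s b)"
      by (simp add: algebra_simps)
    also have "\<dots> \<in> V'" unfolding V'_def
      by (intro span_sum span_scale span_base) auto
    finally show ?thesis .
  qed
  show ?thesis
  proof (rule that[OF _ WV' V'V eV enz dimV VL dec])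
    show "subspace V'" unfolding V'_def by simp
    show "c (u + v) = c u + c v" if "u \<in> V" "v \<in> V" for u v
      using representation_add[OF b(2), of v u] that b(4) unfolding c_def by simp
    show "c (a *s v) = a * c v" if "v \<in> V" for a v
      using representation_scale[OF b(2), of v a] that b(4) unfolding c_def by simp
  qed
qed

lemma bij_betw_maps_into_sum:
  assumes V: "subspace V" and W: "subspace W" and V': "subspace V'" and V'V: "V' \<subseteq> V" and eV: "e \<in> V"
    and VL: "\<And>z. z \<in> V' \<Longrightarrow> z \<in> span {e} \<Longrightarrow> z = 0"
    and cdec: "\<And>v. v \<in> V \<Longrightarrow> v - c v *s e \<in> V'"
    and cadd: "\<And>u v. u \<in> V \<Longrightarrow> v \<in> V \<Longrightarrow> c (u + v) = c u + c v"
    and cscale: "\<And>a v. v \<in> V \<Longrightarrow> c (a *s v) = a * c v"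
  shows "bij_betw (\<lambda>(P, A). \<lambda>x. A x + P x) (maps_into W (span {e}) \<times> maps_into W V') (maps_into W V)"
  unfolding bij_betw_def
proof (intro conjI)
  have LV: "span {e} \<subseteq> V" using eV by (intro span_minimal[OF _ V]) auto
  show "inj_on (\<lambda>(P, A). \<lambda>x. A x + P x) (maps_into W (span {e}) \<times> maps_into W V')"
  proof (rule inj_onI, clarify)
    fix P A P' A'
    assume P: "P \<in> maps_into W (span {e})" and A: "A \<in> maps_into W V'"
      and P': "P' \<in> maps_into W (span {e})" and A': "A' \<in> maps_into W V'"
      and eq: "(\<lambda>x. A x + P x) = (\<lambda>x. A' x + P' x)"
    have "A x = A' x \<and> P x = P' x" for x
    proof (cases "x \<in> W")
      case True
      have sum_eq: "A x + P x = A' x + P' x" using fun_cong[OF eq, of x] by simp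
      have "A x - A' x \<in> V'" using A A' True subspace_diff[OF V'] unfolding maps_into_def by simp
      moreover have "P' x - P x \<in> span {e}" using P P' True span_diff unfolding maps_into_def by simp
      moreover have "A x - A' x = P' x - P x" using sum_eq by (simp add: algebra_simps)
      ultimately have "P' x - P x = 0" by (intro VL) simp_all
      then show ?thesis using sum_eq by simp
    next
      case False then show ?thesis using A A' P P' unfolding maps_into_def by simp
    qed
    then show "P = P' \<and> A = A'" by auto
  qed
  show "(\<lambda>(P, A). \<lambda>x. A x + P x) ` (maps_into W (span {e}) \<times> maps_into W V') = maps_into W V"
  proof (intro equalityI subsetI)
    fix T assume "T \<in> (\<lambda>(P, A). \<lambda>x. A x + P x) ` (maps_into W (span {e}) \<times> maps_into W V')"
    then obtain P A where P: "P \<in> maps_into W (span {e})" and A: "A \<in> maps_into W V'"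
      and T: "T = (\<lambda>x. A x + P x)" by auto
    have "A x + P x \<in> V" if "x \<in> W" for x
    proof (rule subspace_add[OF V])
      show "A x \<in> V" using A that V'V unfolding maps_into_def by auto
      show "P x \<in> V" using P that LV unfolding maps_into_def by auto
    qed
    then show "T \<in> maps_into W V"
      using A P unfolding T maps_into_def linear_on_def by (simp add: algebra_simps scale_right_distrib)
  next
    fix T assume T: "T \<in> maps_into W V"
    then have linT: "linear_on W T" and TV: "\<And>x. x \<in> W \<Longrightarrow> T x \<in> V"
      and T0: "\<And>x. x \<notin> W \<Longrightarrow> T x = 0"
      unfolding maps_into_def by simp_all
    define P where "P x = (if x \<in> W then c (T x) *s e else 0)" for x
    define A where "A x = T x - P x" for x
    have linP: "linear_on W P"
      unfolding linear_on_def
    proof (intro conjI ballI allI)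
      fix x y assume x: "x \<in> W" and y: "y \<in> W"
      have "T (x + y) = T x + T y" using linT x y unfolding linear_on_def by simp
      then show "P (x + y) = P x + P y"
        using x y subspace_add[OF W] cadd[OF TV[OF x] TV[OF y]] unfolding P_def
        by (simp add: scale_left_distrib)
    next
      fix a x assume x: "x \<in> W"
      have "T (a *s x) = a *s T x" using linT x unfolding linear_on_def by simp
      then show "P (a *s x) = a *s P x"
        using x subspace_scale[OF W] cscale[OF TV[OF x]] unfolding P_def by simp
    qed
    have PM: "P \<in> maps_into W (span {e})" unfolding maps_into_def
      using linP by (auto simp: P_def intro: span_scale span_base)
    have linA: "linear_on W A" unfolding A_def
      using linP linT unfolding linear_on_def by (simp add: algebra_simps scale_right_diff_distrib)
    have AM: "A \<in> maps_into W V'" unfolding maps_into_def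
      using linA cdec TV T0 by (auto simp: A_def P_def)
    have "T = (\<lambda>x. A x + P x)" unfolding A_def by simp
    then show "T \<in> (\<lambda>(P, A). \<lambda>x. A x + P x) ` (maps_into W (span {e}) \<times> maps_into W V')"
      using PM AM by force
  qed
qed

lemma card_inv_core_eq_sum_kernels:
  assumes V': "subspace V'" and WV': "W \<subseteq> V'"
    and VL: "\<And>z. z \<in> V' \<Longrightarrow> z \<in> span {e} \<Longrightarrow> z = 0"
    and bij: "bij_betw (\<lambda>(P, A). \<lambda>x. A x + P x) (maps_into W (span {e}) \<times> maps_into W V') (maps_into W V)"
  shows "card {T \<in> maps_into W V. inv_core W T = U}
       = (\<Sum>P\<in>maps_into W (span {e}).
            card {A \<in> maps_into W V'. inv_core {x\<in>W. P x = 0} (zero_outside {x\<in>W. P x = 0} A) = U})"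
proof -
  let ?M = "maps_into W (span {e})"
  let ?G = "\<lambda>P. {A \<in> maps_into W V'. inv_core {x\<in>W. P x = 0} (zero_outside {x\<in>W. P x = 0} A) = U}"
  have "bij_betw (\<lambda>(P, A). \<lambda>x. A x + P x)
      {PA \<in> ?M \<times> maps_into W V'. snd PA \<in> ?G (fst PA)} {T \<in> maps_into W V. inv_core W T = U}"
    using inv_core_add_complement[OF WV' V' _ _ VL] by (intro bij_betw_Collect[OF bij]) auto
  moreover have "{PA \<in> ?M \<times> maps_into W V'. snd PA \<in> ?G (fst PA)} = (SIGMA P:?M. ?G P)"
    by auto
  ultimately have "card (SIGMA P:?M. ?G P) = card {T \<in> maps_into W V. inv_core W T = U}"
    by (simp add: bij_betw_same_card)
  then show ?thesis by simp
qed

lemma card_inv_core_zero_outside: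
  assumes V': "subspace V'" and W: "subspace W" and K: "subspace K" and KW: "K \<subseteq> W"
  shows "card {A \<in> maps_into W V'. inv_core K (zero_outside K A) = U}
       = card {S \<in> maps_into K V'. inv_core K S = U} * CARD('a) ^ (dim V' * (dim W - dim K))"
    (is "card ?G = _")
proof -
  let ?Z = "{S \<in> maps_into K V'. inv_core K S = U}"
  let ?F = "\<lambda>S. {A \<in> maps_into W V'. \<forall>x\<in>K. A x = S x}"
  have restr: "zero_outside K A \<in> maps_into K V'" if "A \<in> maps_into W V'" for A
    using that KW linear_on_subset[of W A K] subspace_add[OF K] subspace_scale[OF K]
    by (auto simp: maps_into_def zero_outside_def linear_on_def)
  have agree: "zero_outside K A = S" if "A \<in> ?F S" "S \<in> maps_into K V'" for A S
    using that by (auto simp: zero_outside_def maps_into_def)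
  have img: "(\<lambda>A. (zero_outside K A, A)) ` ?G = (SIGMA S:?Z. ?F S)"
    using restr agree by (auto simp: zero_outside_def image_iff)
  have inj: "inj_on (\<lambda>A. (zero_outside K A, A)) ?G" by (rule inj_onI) simp
  have "card ?G = card (SIGMA S:?Z. ?F S)" using card_image[OF inj] img by simp
  also have "\<dots> = (\<Sum>S\<in>?Z. CARD('a) ^ (dim V' * (dim W - dim K)))"
    using card_extensions[OF K W KW V'] by simp
  finally show ?thesis by simp
qed

lemma sum_maps_into_line_by_kernel:
  fixes g :: "('v \<Rightarrow> 'v) \<Rightarrow> nat" and h :: "nat \<Rightarrow> nat"
  assumes e: "e \<noteq> 0" and W: "subspace W" and U: "subspace U" and UW: "U \<subseteq> W"
    and g: "\<And>P. P \<in> maps_into W (span {e}) \<Longrightarrow>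
              g P = (if U \<subseteq> {x\<in>W. P x = 0} then h (dim {x\<in>W. P x = 0}) else 0)"
  shows "(\<Sum>P\<in>maps_into W (span {e}). g P) = h (dim W) + (CARD('a) ^ (dim W - dim U) - 1) * h (dim W - 1)"
proof -
  let ?M = "maps_into W (span {e})"
  let ?N = "{P \<in> ?M - {\<lambda>x. 0}. U \<subseteq> {x\<in>W. P x = 0}}"
  have zero: "(\<lambda>x. 0) \<in> ?M" by (simp add: zero_in_maps_into)
  have nonzero: "g P = (if U \<subseteq> {x\<in>W. P x = 0} then h (dim W - 1) else 0)" if "P \<in> ?M - {\<lambda>x. 0}" for P
  proof -
    have PM: "P \<in> ?M" and nz: "P \<noteq> (\<lambda>x. 0)" using that by auto
    have "dim {x\<in>W. P x = 0} = dim W - 1" using dim_kernel_Suc[OF PM W nz] by simp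
    then show ?thesis using g[OF PM] by simp
  qed
  have "card {P \<in> ?M. \<forall>x\<in>U. P x = (\<lambda>x. 0) x} = CARD('a) ^ (dim W - dim U)"
    using card_extensions[OF U W UW subspace_span zero_in_maps_into[OF subspace_span]] e by simp
  moreover have "?N = {P \<in> ?M. \<forall>x\<in>U. P x = (\<lambda>x. 0) x} - {\<lambda>x. 0}" using UW by auto
  ultimately have card_N: "card ?N = CARD('a) ^ (dim W - dim U) - 1"
    using zero by (simp add: card_Diff_singleton)
  have "(\<Sum>P\<in>?M. g P) = g (\<lambda>x. 0) + (\<Sum>P\<in>?M - {\<lambda>x. 0}. g P)"
    by (rule sum.remove[OF finite_map_set zero])
  also have "g (\<lambda>x. 0) = h (dim W)" using g[OF zero] UW by simp
  also have "(\<Sum>P\<in>?M - {\<lambda>x. 0}. g P)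
      = (\<Sum>P\<in>?M - {\<lambda>x. 0}. if U \<subseteq> {x\<in>W. P x = 0} then h (dim W - 1) else 0)"
    by (rule sum.cong[OF refl nonzero])
  also have "\<dots> = (\<Sum>P\<in>?N. h (dim W - 1))"
    by (rule sum.inter_filter[symmetric]) simp
  finally show ?thesis using card_N by simp
qed

lemma inv_core_maps_into_self: "T \<in> maps_into W W \<Longrightarrow> inv_core W T = W"
  using invariant_subset_inv_core[of W W T] inv_core_subset[of W T]
  by (auto simp: maps_into_def)

lemma card_inv_core_maps_into_self:
  assumes W: "subspace W" and U: "subspace U" and UW: "U \<subseteq> W"
  shows "card {T \<in> maps_into W W. inv_core W T = U} = max_inv_count CARD('a) (dim W) (dim W) (dim U)"
proof (cases "U = W")
  case True
  then have "{T \<in> maps_into W W. inv_core W T = U} = maps_into W W"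
    using inv_core_maps_into_self by auto
  then show ?thesis
    using card_maps_into[OF W W] True by (simp add: max_inv_count_full)
next
  case False
  have span_U: "span U = U" and span_W: "span W = W" using U W by (simp_all only: span_eq_iff)
  have "span U \<subset> span W" unfolding span_U span_W using UW False by blast
  then have "dim U < dim W" by (rule fd.dim_psubset)
  then show ?thesis
    using False inv_core_maps_into_self by (simp add: max_inv_count_full)
qed

lemma card_inv_core:
  assumes "subspace V" "subspace W" "W \<subseteq> V" "subspace U" "U \<subseteq> W"
  shows "card {T \<in> maps_into W V. inv_core W T = U} = max_inv_count CARD('a) (dim V) (dim W) (dim U)"
  using assms
proof (induction "dim V" arbitrary: V W U rule: less_induct)
  case less
  note V = less.prems(1) and W = less.prems(2) and WV = less.prems(3)
    and U = less.prems(4) and UW = less.prems(5)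
  show ?case
  proof (cases "W = V")
    case True then show ?thesis using card_inv_core_maps_into_self[OF W U UW] by simp
  next
    case False
    obtain V' e c where sp: "subspace V'" "W \<subseteq> V'" "V' \<subseteq> V" "e \<in> V" "e \<noteq> 0"
      "dim V = Suc (dim V')"
      "\<And>z. z \<in> V' \<Longrightarrow> z \<in> span {e} \<Longrightarrow> z = 0"
      "\<And>v. v \<in> V \<Longrightarrow> v - c v *s e \<in> V'"
      "\<And>u v. u \<in> V \<Longrightarrow> v \<in> V \<Longrightarrow> c (u + v) = c u + c v"
      "\<And>a v. v \<in> V \<Longrightarrow> c (a *s v) = a * c v"
      using obtain_hyperplane[OF V W WV False] by blast
    let ?q = "CARD('a)" and ?k = "dim W" and ?d = "dim U"
    define m where "m = dim V'"
    define h where "h j = max_inv_count ?q m j ?d * ?q ^ (m * (?k - j))" for j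
    have "card {T \<in> maps_into W V. inv_core W T = U}
        = (\<Sum>P\<in>maps_into W (span {e}).
            card {A \<in> maps_into W V'. inv_core {x\<in>W. P x = 0} (zero_outside {x\<in>W. P x = 0} A) = U})"
      using card_inv_core_eq_sum_kernels[OF sp(1,2,7) bij_betw_maps_into_sum[OF V W sp(1,3,4,7,8,9,10)]] .
    also have "\<dots> = h ?k + (?q ^ (?k - ?d) - 1) * h (?k - 1)"
    proof (rule sum_maps_into_line_by_kernel[OF sp(5) W U UW])
      fix P assume P: "P \<in> maps_into W (span {e})"
      let ?K = "{x\<in>W. P x = 0}"
      show "card {A \<in> maps_into W V'. inv_core ?K (zero_outside ?K A) = U}
          = (if U \<subseteq> ?K then h (dim ?K) else 0)"
      proof (cases "U \<subseteq> ?K")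
        case True
        have K: "subspace ?K" by (rule subspace_kernel[OF P W])
        have "card {S \<in> maps_into ?K V'. inv_core ?K S = U} = max_inv_count ?q m (dim ?K) ?d"
          using less.hyps[of V' ?K U] sp(1,2,6) K U True unfolding m_def by auto
        then show ?thesis
          using card_inv_core_zero_outside[OF sp(1) W K] True unfolding h_def m_def by simp
      next
        case False
        then have "{A \<in> maps_into W V'. inv_core ?K (zero_outside ?K A) = U} = {}"
          using inv_core_subset by blast
        then show ?thesis using False by simp
      qed
    qed
    also have "\<dots> = max_inv_count ?q (dim V) ?k ?d"
    proof -
      have "?d \<le> ?k" "?k \<le> m" using fd.dim_subset UW sp(2) unfolding m_def by auto
      then have "max_inv_count ?q (dim V) ?k ?d
          = max_inv_count ?q m ?k ?d + (?q ^ (?k - ?d) - 1) * ?q ^ m * max_inv_count ?q m (?k - 1) ?d"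
        unfolding sp(6) m_def[symmetric] using card_scalars_ge_1 by (rule max_inv_count_Suc)
      moreover have "?q ^ (?k - ?d) - 1 = 0" if "?k = ?d" using that by simp
      moreover have "?k - (?k - 1) = 1" if "?k \<noteq> ?d" using that \<open>?d \<le> ?k\<close> by simp
      ultimately show ?thesis unfolding h_def by (cases "?k = ?d") auto
    qed
    finally show ?thesis .
  qed
qed

end

theorem theorem3:
  fixes scale :: "'a::field \<Rightarrow> 'v::ab_group_add \<Rightarrow> 'v"
    and W U :: "'v set" and n k d :: nat
  assumes "vector_space scale"
    and "finite (UNIV :: 'a set)"
    and "finite (UNIV :: 'v set)"
    and "vector_space.dim scale (UNIV :: 'v set) = n"
    and "module.subspace scale W" and "vector_space.dim scale W = k"
    and "0 < k" and "k \<le> n"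
    and "module.subspace scale U" and "U \<subseteq> W" and "vector_space.dim scale U = d"
  shows "card {T \<in> lin_maps scale W. max_inv_sub scale W T = U}
         = card (UNIV :: 'a set) ^ (d ^ 2)
           * (\<Prod>i\<in>{d+1..k}. card (UNIV :: 'a set) ^ n - card (UNIV :: 'a set) ^ i)"
proof -
  interpret finite_vector_space scale
    using assms(1-3) by (simp add: finite_vector_space_def finite_vector_space_axioms_def)
  have "{T \<in> lin_maps scale W. max_inv_sub scale W T = U} = {T \<in> maps_into W UNIV. inv_core W T = U}"
    using max_inv_sub_eq_inv_core[OF _ assms(5)] unfolding lin_maps_eq_maps_into maps_into_def by auto
  then show ?thesis
    using card_inv_core[OF subspace_UNIV assms(5) subset_UNIV assms(9,10)] assms(4,6,11)
    by (simp add: max_inv_count_def)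
qed

end
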